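(* Let $\mathcal A$ be a Banach algebra and $I$ a closed two-sided ideal of $\mathcal A$ with $\mathcal A^2\subseteq I$. If $\mathcal A$ is $I$-weakly amenable, then $\mathcal A^2$ is dense in $I$.
   Context: $\mathcal A^2$ denotes the linear span of $\{ab:a,b\in\mathcal A\}$. $I^*$ is a Banach $\mathcal A$-bimodule with $\langle x,a\cdot f\rangle=\langle xa,f\rangle$, $\langle x,f\cdot a\rangle=\langle ax,f\rangle$. $\mathcal A$ is $I$-weakly amenable if every derivation $D:\mathcal A\to I^*$ (continuous linear map with $D(ab)=a\cdot D(b)+D(a)\cdot b$) is inner, i.e. $D(a)=a\cdot f-f\cdot a$ for some $f\in I^*$. *)

theory Defs
  imports "HOL-Analysis.Analysis"
begin

text \<open>Banach algebras are modelled by the type class real_normed_algebra + banach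
  (real scalars, not necessarily unital or commutative).\<close>

definition closed_two_sided_ideal :: "'a::{real_normed_algebra,banach} set \<Rightarrow> bool" where
  "closed_two_sided_ideal I \<longleftrightarrow> subspace I \<and> closed I \<and>
     (\<forall>a x. x \<in> I \<longrightarrow> a * x \<in> I \<and> x * a \<in> I)"

text \<open>Elements of the dual space I^*: bounded linear functionals on the subspace I
  (a function on the whole algebra, only its values on I matter).\<close>
definition dual_elem :: "'a::real_normed_vector set \<Rightarrow> ('a \<Rightarrow> real) \<Rightarrow> bool" where
  "dual_elem I f \<longleftrightarrow> (\<forall>x\<in>I. \<forall>y\<in>I. f (x + y) = f x + f y) \<and>
     (\<forall>c. \<forall>x\<in>I. f (c *\<^sub>R x) = c * f x) \<and>
     (\<exists>K. \<forall>x\<in>I. \<bar>f x\<bar> \<le> K * norm x)"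

definition lmod :: "'a::real_normed_algebra \<Rightarrow> ('a \<Rightarrow> real) \<Rightarrow> ('a \<Rightarrow> real)" where
  "lmod a f = (\<lambda>x. f (x * a))"

definition rmod :: "('a \<Rightarrow> real) \<Rightarrow> 'a::real_normed_algebra \<Rightarrow> ('a \<Rightarrow> real)" where
  "rmod f a = (\<lambda>x. f (a * x))"

text \<open>Continuous derivations D : A \<rightarrow> I^*; equalities in I^* are equalities on I.\<close>
definition ideal_derivation ::
  "'a::{real_normed_algebra,banach} set \<Rightarrow> ('a \<Rightarrow> 'a \<Rightarrow> real) \<Rightarrow> bool" where
  "ideal_derivation I D \<longleftrightarrow>
     (\<forall>a. dual_elem I (D a)) \<and>
     (\<forall>a b. \<forall>x\<in>I. D (a + b) x = D a x + D b x) \<and>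
     (\<forall>c a. \<forall>x\<in>I. D (c *\<^sub>R a) x = c * D a x) \<and>
     (\<exists>K. \<forall>a. \<forall>x\<in>I. \<bar>D a x\<bar> \<le> K * norm a * norm x) \<and>
     (\<forall>a b. \<forall>x\<in>I. D (a * b) x = lmod a (D b) x + rmod (D a) b x)"

definition inner_ideal_derivation ::
  "'a::{real_normed_algebra,banach} set \<Rightarrow> ('a \<Rightarrow> 'a \<Rightarrow> real) \<Rightarrow> bool" where
  "inner_ideal_derivation I D \<longleftrightarrow>
     (\<exists>f. dual_elem I f \<and> (\<forall>a. \<forall>x\<in>I. D a x = lmod a f x - rmod f a x))"

definition I_weakly_amenable :: "'a::{real_normed_algebra,banach} set \<Rightarrow> bool" where
  "I_weakly_amenable I \<longleftrightarrow>
     (\<forall>D. ideal_derivation I D \<longrightarrow> inner_ideal_derivation I D)"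

definition alg_square :: "'a::real_normed_algebra set" where
  "alg_square = span {a * b | a b. True}"

end

theory Submission
  imports Defs
begin

text \<open>If some x \<in> I lay outside the closure of A^2, the Hahn-Banach theorem would give a
  bounded functional f vanishing on A^2 with f x \<noteq> 0. Then D a = f(a) f is a derivation
  into I^*, because D(ab), a\<cdot>D(b) and D(a)\<cdot>b all vanish, products lying in A^2. An inner
  derivation satisfies D(x)(x) = g(x x) - g(x x) = 0, whereas here D(x)(x) = f(x)^2 \<noteq> 0.

  The real Hahn-Banach theorem is proved along the classical lines: a linear functional
  dominated by the norm on a subspace, represented by its graph, extends by one dimension,
  and Zorn's lemma yields an extension to the whole space.\<close>

definition dominated_linear_graph :: "('a::real_normed_vector \<times> real) set \<Rightarrow> bool" where
  "dominated_linear_graph G \<longleftrightarrow>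
     (\<forall>x a b. (x, a) \<in> G \<longrightarrow> (x, b) \<in> G \<longrightarrow> a = b) \<and>
     (\<forall>x y a b. (x, a) \<in> G \<longrightarrow> (y, b) \<in> G \<longrightarrow> (x + y, a + b) \<in> G) \<and>
     (\<forall>x a c. (x, a) \<in> G \<longrightarrow> (c *\<^sub>R x, c * a) \<in> G) \<and>
     (\<forall>x a. (x, a) \<in> G \<longrightarrow> a \<le> norm x)"

lemma dominated_linear_graphD:
  assumes "dominated_linear_graph G"
  shows "(x, a) \<in> G \<Longrightarrow> (x, b) \<in> G \<Longrightarrow> a = b"
    and "(x, a) \<in> G \<Longrightarrow> (y, b) \<in> G \<Longrightarrow> (x + y, a + b) \<in> G"
    and "(x, a) \<in> G \<Longrightarrow> (c *\<^sub>R x, c * a) \<in> G"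
    and "(x, a) \<in> G \<Longrightarrow> a \<le> norm x"
  using assms unfolding dominated_linear_graph_def by blast+

definition graph_extension :: "('a::real_vector \<times> real) set \<Rightarrow> 'a \<Rightarrow> real \<Rightarrow> ('a \<times> real) set" where
  "graph_extension G y c = {(s + t *\<^sub>R y, a + t * c) | s a t. (s, a) \<in> G}"

lemma graph_extension_mem: "(s, a) \<in> G \<Longrightarrow> (s + t *\<^sub>R y, a + t * c) \<in> graph_extension G y c"
  unfolding graph_extension_def by blast

lemma subset_graph_extension: "G \<subseteq> graph_extension G y c"
  using graph_extension_mem[where t = 0] by auto

lemma graph_extension_new_point: "(0, 0) \<in> G \<Longrightarrow> (y, c) \<in> graph_extension G y c"
  using graph_extension_mem[where t = 1] by fastforce

lemma graph_extension_coordinates_unique: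
  assumes G: "dominated_linear_graph G" and y: "y \<notin> fst ` G"
    and in_G: "(s1, a1) \<in> G" "(s2, a2) \<in> G" and eq: "s1 + t1 *\<^sub>R y = s2 + t2 *\<^sub>R y"
  shows "t1 = t2" and "a1 = a2"
proof -
  show t: "t1 = t2"
  proof (rule ccontr)
    assume ne: "t1 \<noteq> t2"
    have diff: "(s2 + (-1) *\<^sub>R s1, a2 + (-1) * a1) \<in> G"
      using in_G by (intro dominated_linear_graphD(2,3)[OF G])
    have "(t1 - t2) *\<^sub>R y = s2 + (-1) *\<^sub>R s1"
      using eq by (simp add: algebra_simps)
    then have "(1 / (t1 - t2)) *\<^sub>R ((t1 - t2) *\<^sub>R y) = (1 / (t1 - t2)) *\<^sub>R (s2 + (-1) *\<^sub>R s1)"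
      by (rule arg_cong)
    then have "y = (1 / (t1 - t2)) *\<^sub>R (s2 + (-1) *\<^sub>R s1)"
      using ne by simp
    then have "y \<in> fst ` G"
      using dominated_linear_graphD(3)[OF G diff] by force
    with y show False ..
  qed
  with eq have "s1 = s2" by simp
  with in_G show "a1 = a2" by (blast intro: dominated_linear_graphD(1)[OF G])
qed

lemma graph_extension_le_norm:
  assumes G: "dominated_linear_graph G" and sa: "(s, a) \<in> G"
    and lower: "\<And>u b. (u, b) \<in> G \<Longrightarrow> b - norm (u - y) \<le> c"
    and upper: "\<And>v b. (v, b) \<in> G \<Longrightarrow> c \<le> norm (v + y) - b"
  shows "a + t * c \<le> norm (s + t *\<^sub>R y)"
proof -
  consider "t = 0" | "t > 0" | "t < 0" by linarith
  then show ?thesis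
  proof cases
    case 1
    with sa show ?thesis by (simp add: dominated_linear_graphD(4)[OF G])
  next
    case 2
    have "t *\<^sub>R ((1 / t) *\<^sub>R s + y) = s + t *\<^sub>R y"
      using 2 by (simp add: scaleR_right_distrib)
    then have norm_eq: "t * norm ((1 / t) *\<^sub>R s + y) = norm (s + t *\<^sub>R y)"
      using 2 by (metis abs_of_pos norm_scaleR)
    have "c \<le> norm ((1 / t) *\<^sub>R s + y) - (1 / t) * a"
      using upper dominated_linear_graphD(3)[OF G sa] by blast
    then have "t * c \<le> t * (norm ((1 / t) *\<^sub>R s + y) - (1 / t) * a)"
      using 2 by (simp add: mult_left_mono)
    also have "\<dots> = norm (s + t *\<^sub>R y) - a"
      using 2 norm_eq by (simp add: right_diff_distrib)
    finally show ?thesis by simp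
  next
    case 3
    have "(- t) *\<^sub>R ((1 / - t) *\<^sub>R s - y) = s + t *\<^sub>R y"
      using 3 by (simp add: scaleR_right_diff_distrib)
    then have norm_eq: "(- t) * norm ((1 / - t) *\<^sub>R s - y) = norm (s + t *\<^sub>R y)"
      using 3 by (metis abs_of_pos neg_0_less_iff_less norm_scaleR)
    have "(1 / - t) * a - norm ((1 / - t) *\<^sub>R s - y) \<le> c"
      using lower dominated_linear_graphD(3)[OF G sa] by blast
    then have "(- t) * ((1 / - t) * a - norm ((1 / - t) *\<^sub>R s - y)) \<le> (- t) * c"
      using 3 by (simp add: mult_left_mono)
    also have "(- t) * ((1 / - t) * a - norm ((1 / - t) *\<^sub>R s - y)) = a - norm (s + t *\<^sub>R y)"
      using 3 norm_eq by (simp add: right_diff_distrib)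
    finally show ?thesis by simp
  qed
qed

lemma dominated_linear_graph_extension:
  assumes G: "dominated_linear_graph G" and y: "y \<notin> fst ` G"
    and lower: "\<And>u b. (u, b) \<in> G \<Longrightarrow> b - norm (u - y) \<le> c"
    and upper: "\<And>v b. (v, b) \<in> G \<Longrightarrow> c \<le> norm (v + y) - b"
  shows "dominated_linear_graph (graph_extension G y c)"
  unfolding dominated_linear_graph_def
proof (intro conjI allI impI)
  fix x a b assume "(x, a) \<in> graph_extension G y c" "(x, b) \<in> graph_extension G y c"
  then obtain s1 a1 t1 s2 a2 t2
    where 1: "(s1, a1) \<in> G" "x = s1 + t1 *\<^sub>R y" "a = a1 + t1 * c"
      and 2: "(s2, a2) \<in> G" "x = s2 + t2 *\<^sub>R y" "b = a2 + t2 * c"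
    unfolding graph_extension_def by blast
  with graph_extension_coordinates_unique[OF G y 1(1) 2(1), of t1 t2] show "a = b" by simp
next
  fix x1 x2 a b assume "(x1, a) \<in> graph_extension G y c" "(x2, b) \<in> graph_extension G y c"
  then obtain s1 a1 t1 s2 a2 t2
    where 1: "(s1, a1) \<in> G" "x1 = s1 + t1 *\<^sub>R y" "a = a1 + t1 * c"
      and 2: "(s2, a2) \<in> G" "x2 = s2 + t2 *\<^sub>R y" "b = a2 + t2 * c"
    unfolding graph_extension_def by blast
  then have "(s1 + s2, a1 + a2) \<in> G"
    by (blast intro: dominated_linear_graphD(2)[OF G])
  moreover have "x1 + x2 = (s1 + s2) + (t1 + t2) *\<^sub>R y" "a + b = (a1 + a2) + (t1 + t2) * c"
    using 1 2 by (simp_all add: algebra_simps)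
  ultimately show "(x1 + x2, a + b) \<in> graph_extension G y c"
    unfolding graph_extension_def by blast
next
  fix x a r assume "(x, a) \<in> graph_extension G y c"
  then obtain s a' t where 1: "(s, a') \<in> G" "x = s + t *\<^sub>R y" "a = a' + t * c"
    unfolding graph_extension_def by blast
  then have "(r *\<^sub>R s, r * a') \<in> G"
    by (blast intro: dominated_linear_graphD(3)[OF G])
  moreover have "r *\<^sub>R x = r *\<^sub>R s + (r * t) *\<^sub>R y" "r * a = r * a' + (r * t) * c"
    using 1 by (simp_all add: algebra_simps)
  ultimately show "(r *\<^sub>R x, r * a) \<in> graph_extension G y c"
    unfolding graph_extension_def by blast
next
  fix x a assume "(x, a) \<in> graph_extension G y c"
  then show "a \<le> norm x"
    unfolding graph_extension_def using graph_extension_le_norm[OF G _ lower upper] by blast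
qed

lemma graph_extension_constant_exists:
  fixes y :: "'a::real_normed_vector"
  assumes G: "dominated_linear_graph G" and "G \<noteq> {}"
  obtains c where "\<And>u b. (u, b) \<in> G \<Longrightarrow> b - norm (u - y) \<le> c"
    and "\<And>v b. (v, b) \<in> G \<Longrightarrow> c \<le> norm (v + y) - b"
proof
  define T where "T = {a - norm (u - y) | u a. (u, a) \<in> G}"
  have lower_le_upper: "a - norm (u - y) \<le> norm (v + y) - b"
    if "(u, a) \<in> G" "(v, b) \<in> G" for u a v b
  proof -
    have "a + b \<le> norm (u + v)"
      using that by (blast intro: dominated_linear_graphD(2,4)[OF G])
    also have "\<dots> = norm ((u - y) + (v + y))" by simp
    also have "\<dots> \<le> norm (u - y) + norm (v + y)" by (rule norm_triangle_ineq)
    finally show ?thesis by simp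
  qed
  obtain u0 a0 where u0: "(u0, a0) \<in> G" using \<open>G \<noteq> {}\<close> by auto
  have "bdd_above T"
    unfolding T_def bdd_above_def using lower_le_upper u0 by blast
  then show "a - norm (u - y) \<le> Sup T" if "(u, a) \<in> G" for u a
    by (rule cSup_upper[rotated]) (use that T_def in auto)
  show "Sup T \<le> norm (v + y) - b" if "(v, b) \<in> G" for v b
    by (rule cSup_least) (use that u0 T_def lower_le_upper in auto)
qed

lemma dominated_linear_graph_Union:
  assumes G: "\<And>G. G \<in> C \<Longrightarrow> dominated_linear_graph G" and "chain\<^sub>\<subseteq> C"
  shows "dominated_linear_graph (\<Union>C)"
proof -
  have common: "\<exists>G\<in>C. p \<in> G \<and> q \<in> G" if pq: "p \<in> \<Union>C" "q \<in> \<Union>C" for p q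
  proof -
    obtain G1 G2 where "G1 \<in> C" "p \<in> G1" "G2 \<in> C" "q \<in> G2" using pq by blast
    moreover have "G1 \<subseteq> G2 \<or> G2 \<subseteq> G1"
      using \<open>chain\<^sub>\<subseteq> C\<close> \<open>G1 \<in> C\<close> \<open>G2 \<in> C\<close> unfolding chain_subset_def by blast
    ultimately show ?thesis by blast
  qed
  show ?thesis
    unfolding dominated_linear_graph_def
  proof (intro conjI allI impI)
    fix x a b assume "(x, a) \<in> \<Union>C" "(x, b) \<in> \<Union>C"
    then obtain H where "H \<in> C" "(x, a) \<in> H" "(x, b) \<in> H" using common by blast
    then show "a = b" using dominated_linear_graphD(1)[OF G] by blast
  next
    fix x y a b assume "(x, a) \<in> \<Union>C" "(y, b) \<in> \<Union>C"
    then obtain H where "H \<in> C" "(x, a) \<in> H" "(y, b) \<in> H" using common by blast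
    then show "(x + y, a + b) \<in> \<Union>C" using dominated_linear_graphD(2)[OF G] by blast
  next
    fix x a c assume "(x, a) \<in> \<Union>C"
    then obtain H where "H \<in> C" "(x, a) \<in> H" by blast
    then show "(c *\<^sub>R x, c * a) \<in> \<Union>C" using dominated_linear_graphD(3)[OF G] by blast
  next
    fix x a assume "(x, a) \<in> \<Union>C"
    then obtain H where "H \<in> C" "(x, a) \<in> H" by blast
    then show "a \<le> norm x" using dominated_linear_graphD(4)[OF G] by blast
  qed
qed

lemma dominated_linear_graph_total_extension:
  fixes G0 :: "('a::real_normed_vector \<times> real) set"
  assumes "dominated_linear_graph G0" and "G0 \<noteq> {}"
  obtains G where "dominated_linear_graph G" "G0 \<subseteq> G" "fst ` G = UNIV"
proof -
  define \<G> where "\<G> = {G :: ('a \<times> real) set. dominated_linear_graph G \<and> G0 \<subseteq> G}"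
  have "\<exists>G\<in>\<G>. \<forall>G'\<in>\<G>. G \<subseteq> G' \<longrightarrow> G' = G"
  proof (rule subset_Zorn_nonempty)
    show "\<G> \<noteq> {}" using assms(1) unfolding \<G>_def by blast
  next
    fix C assume "C \<noteq> {}" "subset.chain \<G> C"
    then have C: "C \<subseteq> \<G>" "chain\<^sub>\<subseteq> C"
      unfolding subset_chain_def chain_subset_def by blast+
    have "dominated_linear_graph (\<Union>C)"
    proof (rule dominated_linear_graph_Union[OF _ C(2)])
      show "dominated_linear_graph G" if "G \<in> C" for G
        using that C(1) unfolding \<G>_def by blast
    qed
    moreover have "G0 \<subseteq> \<Union>C"
      using \<open>C \<noteq> {}\<close> C(1) unfolding \<G>_def by blast
    ultimately show "\<Union>C \<in> \<G>" unfolding \<G>_def by simp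
  qed
  then obtain G where "G \<in> \<G>" and max: "\<forall>G'\<in>\<G>. G \<subseteq> G' \<longrightarrow> G' = G" ..
  then have G: "dominated_linear_graph G" "G0 \<subseteq> G" unfolding \<G>_def by simp_all
  have maximal: "G' = G" if "dominated_linear_graph G'" "G \<subseteq> G'" for G'
    using max that G(2) unfolding \<G>_def by blast
  have "y \<in> fst ` G" for y
  proof (rule ccontr)
    assume y: "y \<notin> fst ` G"
    have "G \<noteq> {}" using G(2) assms(2) by blast
    then obtain c where lower: "\<And>u b. (u, b) \<in> G \<Longrightarrow> b - norm (u - y) \<le> c"
      and upper: "\<And>v b. (v, b) \<in> G \<Longrightarrow> c \<le> norm (v + y) - b"
      using graph_extension_constant_exists[OF G(1), of y] by metis
    obtain s a where "(s, a) \<in> G" using \<open>G \<noteq> {}\<close> by auto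
    then have "(0, 0) \<in> G" using dominated_linear_graphD(3)[OF G(1), of s a 0] by simp
    then have "(y, c) \<in> graph_extension G y c" by (rule graph_extension_new_point)
    moreover have "graph_extension G y c = G"
      by (rule maximal[OF dominated_linear_graph_extension[OF G(1) y lower upper]
            subset_graph_extension])
    ultimately have "(y, c) \<in> G" by simp
    then have "y \<in> fst ` G" by (rule rev_image_eqI) simp
    with y show False ..
  qed
  then have "fst ` G = UNIV" by auto
  with G show thesis by (rule that)
qed

lemma total_dominated_linear_graph_functional:
  fixes G :: "('a::real_normed_vector \<times> real) set"
  assumes G: "dominated_linear_graph G" and total: "fst ` G = UNIV"
  obtains f :: "'a \<Rightarrow> real"
  where "bounded_linear f" "\<And>x a. (x, a) \<in> G \<Longrightarrow> f x = a"
proof -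
  define f where "f x = (THE a. (x, a) \<in> G)" for x
  have f_eq: "f x = a" if "(x, a) \<in> G" for x a
    unfolding f_def using that by (blast intro: the_equality dominated_linear_graphD(1)[OF G])
  have in_G: "(x, f x) \<in> G" for x
  proof -
    obtain a where "(x, a) \<in> G" using total by (metis UNIV_I fst_conv imageE surjective_pairing)
    with f_eq show ?thesis by simp
  qed
  have f_scale: "f (r *\<^sub>R x) = r * f x" for r x
    by (rule f_eq) (rule dominated_linear_graphD(3)[OF G in_G])
  have "bounded_linear f"
  proof (rule bounded_linear_intro[where K = 1])
    show "f (x + y) = f x + f y" for x y
      by (rule f_eq) (intro dominated_linear_graphD(2)[OF G] in_G)
    show "f (r *\<^sub>R x) = r *\<^sub>R f x" for r x
      by (simp add: f_scale)
    show "norm (f x) \<le> norm x * 1" for x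
    proof -
      have "f x \<le> norm x" "f ((-1) *\<^sub>R x) \<le> norm ((-1) *\<^sub>R x)"
        by (rule dominated_linear_graphD(4)[OF G in_G])+
      then show ?thesis using f_scale[of "-1" x] by simp
    qed
  qed
  then show thesis by (rule that) (rule f_eq)
qed

lemma subspace_separating_functional:
  fixes M :: "'a::real_normed_vector set"
  assumes M: "subspace M" and x0: "x0 \<notin> closure M"
  obtains f :: "'a \<Rightarrow> real"
  where "bounded_linear f" "\<And>m. m \<in> M \<Longrightarrow> f m = 0" "f x0 \<noteq> 0"
proof -
  define d where "d = infdist x0 M"
  define Z where "Z = M \<times> {0 :: real}"
  \<comment> \<open>the zero functional on M, extended by the value d at x0, stays below the norm\<close>
  have "0 \<in> M" using M subspace_0 by blast
  then have "d \<noteq> 0" using x0 in_closure_iff_infdist_zero[of M x0] d_def by auto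
  then have d: "d > 0" using infdist_nonneg[of x0 M] d_def by simp
  have "dominated_linear_graph Z"
    using M unfolding dominated_linear_graph_def Z_def by (auto simp: subspace_add subspace_scale)
  moreover have "x0 \<notin> fst ` Z" using x0 closure_subset unfolding Z_def by auto
  moreover have "b - norm (u - x0) \<le> d" if "(u, b) \<in> Z" for u b
    using that d unfolding Z_def by (simp add: order_trans[OF _ less_imp_le[OF d]])
  moreover have "d \<le> norm (v + x0) - b" if "(v, b) \<in> Z" for v b
  proof -
    have "- v \<in> M" using that M subspace_neg unfolding Z_def by auto
    then have "d \<le> dist x0 (- v)" unfolding d_def by (rule infdist_le)
    then show ?thesis using that unfolding Z_def by (simp add: dist_norm add.commute)
  qed
  ultimately have G0: "dominated_linear_graph (graph_extension Z x0 d)"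
    by (rule dominated_linear_graph_extension)
  have M_in_G0: "(m, 0) \<in> graph_extension Z x0 d" if "m \<in> M" for m
    using graph_extension_mem[of m 0 Z 0 x0 d] that by (simp add: Z_def)
  have x0_in_G0: "(x0, d) \<in> graph_extension Z x0 d"
    using graph_extension_mem[of 0 0 Z 1 x0 d] \<open>0 \<in> M\<close> by (simp add: Z_def)
  then have "graph_extension Z x0 d \<noteq> {}" by blast
  obtain G where G: "dominated_linear_graph G" "graph_extension Z x0 d \<subseteq> G" "fst ` G = UNIV"
    by (rule dominated_linear_graph_total_extension[OF G0 \<open>graph_extension Z x0 d \<noteq> {}\<close>])
  obtain f where f: "bounded_linear f" and f_eq: "\<And>x a. (x, a) \<in> G \<Longrightarrow> f x = a"
    using total_dominated_linear_graph_functional[OF G(1,3)] by metis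
  show thesis
  proof (rule that[OF f])
    show "f m = 0" if "m \<in> M" for m
      using f_eq G(2) M_in_G0[OF that] by blast
    show "f x0 \<noteq> 0"
      using f_eq G(2) x0_in_G0 d by force
  qed
qed

lemma ideal_derivation_functional_square:
  fixes f :: "'a::{real_normed_algebra,banach} \<Rightarrow> real"
  assumes f: "bounded_linear f" and products: "\<And>a b. f (a * b) = 0"
  shows "ideal_derivation I (\<lambda>a x. f a * f x)"
proof -
  interpret f: bounded_linear f by (rule f)
  obtain K where K: "\<And>x. \<bar>f x\<bar> \<le> norm x * K" "K > 0"
    using f.pos_bounded by auto
  have "\<bar>f a * f x\<bar> \<le> (K * K) * norm a * norm x" for a x
    using mult_mono[OF K(1)[of a] K(1)[of x]] K(2) by (simp add: abs_mult algebra_simps)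
  then have bound: "\<exists>K'. \<forall>a. \<forall>x\<in>I. \<bar>f a * f x\<bar> \<le> K' * norm a * norm x"
    by blast
  have dual: "dual_elem I (\<lambda>x. f a * f x)" for a
    unfolding dual_elem_def
  proof (intro conjI)
    have "\<bar>f a * f x\<bar> \<le> (\<bar>f a\<bar> * K) * norm x" for x
      using mult_left_mono[OF K(1)[of x], of "\<bar>f a\<bar>"] by (simp add: abs_mult algebra_simps)
    then show "\<exists>K'. \<forall>x\<in>I. \<bar>f a * f x\<bar> \<le> K' * norm x" by blast
  qed (simp_all add: f.add f.scaleR distrib_left)
  show ?thesis
    unfolding ideal_derivation_def lmod_def rmod_def
    using dual bound by (simp add: f.add f.scaleR products distrib_right)
qed

lemma inner_ideal_derivation_diagonal:
  assumes "inner_ideal_derivation I D" and "x \<in> I"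
  shows "D x x = 0"
proof -
  obtain g where "\<forall>a. \<forall>y\<in>I. D a y = lmod a g y - rmod g a y"
    using assms(1) unfolding inner_ideal_derivation_def by blast
  with assms(2) show ?thesis unfolding lmod_def rmod_def by simp
qed

theorem theorem3p8:
  fixes I :: "'a::{real_normed_algebra,banach} set"
  assumes "closed_two_sided_ideal I"
    and "alg_square \<subseteq> I"
    and "I_weakly_amenable I"
  shows "I \<subseteq> closure (alg_square :: 'a set)"
proof
  fix x assume "x \<in> I"
  show "x \<in> closure (alg_square :: 'a set)"
  proof (rule ccontr)
    assume "x \<notin> closure (alg_square :: 'a set)"
    moreover have "subspace (alg_square :: 'a set)"
      unfolding alg_square_def by (rule subspace_span)
    ultimately obtain f :: "'a \<Rightarrow> real"
      where f: "bounded_linear f" "\<And>m. m \<in> alg_square \<Longrightarrow> f m = 0" and "f x \<noteq> 0"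
      by (metis subspace_separating_functional)
    have "f (a * b) = 0" for a b :: 'a
    proof (rule f(2))
      show "a * b \<in> alg_square" unfolding alg_square_def by (rule span_base) blast
    qed
    with f(1) have "ideal_derivation I (\<lambda>a x. f a * f x)"
      by (rule ideal_derivation_functional_square)
    with assms(3) have "inner_ideal_derivation I (\<lambda>a x. f a * f x)"
      unfolding I_weakly_amenable_def by blast
    from inner_ideal_derivation_diagonal[OF this \<open>x \<in> I\<close>] have "f x * f x = 0" .
    with \<open>f x \<noteq> 0\<close> show False by simp
  qed
qed

end
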